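(* Let $W$ be a central type and let $t$ be a closed expression with $\vdash t:W$ derived in the ordered fragment $\mathcal{O}$ (i.e. without the rule (struct)). For every value $v$ with $\vdash v:W$ and all lists of resources $l,l'$, if $\langle t\mid\star\mid l\rangle^+\rightsquigarrow^*\langle v\mid\star\mid l'\rangle^{\varepsilon}$ for some polarity $\varepsilon$, then $l'=l$.
   Context: Polarities are $\varepsilon\in\{+,-\}$. Types: positive $P,Q ::= R \mid 1 \mid A\otimes B \mid A\oplus B$; negative $N,M ::= A\multimap B \mid A\,\&\,B$; $\varpi(P)=+$, $\varpi(N)=-$ ($R$ is an atomic type of resources). Central types are $W ::= 1\mid W\otimes W'\mid W\oplus W'$. Fix variables and resource constants $r_n$ ($n\in\mathbb N$). Expressions $t,u$ and values $v,w$: $t,u ::= v \mid (\mathrm{let}\ x^+=t\ \mathrm{in}\ u)^+ \mid (\mathrm{let}\ x^-=v\ \mathrm{in}\ u)^+ \mid \delta(v,(x,y).t)^+ \mid \delta(v,().t)^+ \mid \delta(v,x.t,y.u)^+ \mid (v\,w)^+ \mid (\pi_1 v)^+ \mid (\pi_2 v)^+$; $v,w ::= (\mathrm{let}\ x^+=t\ \mathrm{in}\ v)^- \mid (\mathrm{let}\ x^-=v\ \mathrm{in}\ w)^- \mid \delta(v,(x,y).w)^- \mid \delta(v,().w)^- \mid \delta(v,x.w,y.w')^- \mid (v\,w)^- \mid (\pi_1 v)^- \mid (\pi_2 v)^- \mid x \mid \mathrm{new} \mid \mathrm{delete} \mid (v,w) \mid () \mid \iota_1 v \mid \iota_2 v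 \mid \lambda x.t \mid \langle t,u\rangle \mid r_n$. $t[v/x]$ is capture-avoiding substitution. Contexts are finite lists of typed variables. Typing rules of $\mathcal{L}$ ($v,w$ range over values): (var) $x:A\vdash x:A$. (struct) from $\Gamma\vdash t:A$ and a type-preserving bijection $\sigma$ from entries of $\Gamma$ to entries of $\Gamma'$ (permutation plus renaming) derive $\Gamma'\vdash t[\sigma]:A$. $\vdash\mathrm{new}:1\multimap(R\oplus 1)$; $\vdash\mathrm{delete}:R\multimap 1$. (let) from $\Delta\vdash t:A$, $\Gamma,x:A\vdash u:B$ derive $\Gamma,\Delta\vdash(\mathrm{let}\ x^{\varpi(A)}=t\ \mathrm{in}\ u)^{\varpi(B)}:B$. From $\Gamma\vdash v:A$, $\Delta\vdash w:B$ derive $\Gamma,\Delta\vdash(v,w):A\otimes B$; from $\Delta\vdash v:A\otimes B$, $\Gamma,x:A,y:B,\Gamma'\vdash t:C$ derive $\Gamma,\Delta,\Gamma'\vdash\delta(v,(x,y).t)^{\varpi(C)}:C$. $\vdash():1$; from $\Delta\vdash v:1$, $\Gamma,\Gamma'\vdash t:A$ derive $\Gamma,\Delta,\Gamma'\vdash\delta(v,().t)^{\varpi(A)}:A$. From $\Gamma\vdash v:A$ derive $\Gamma\vdash\iota_1v:A\oplus B$; from $\Gamma\vdash v:B$ derive $\Gamma\vdash\iota_2v:A\oplus B$; from $\Delta\vdash v:A\oplus B$, $\Gamma,x:A,\Gamma'\vdash t:C$, $\Gamma,y:B,\Gamma'\vdash u:C$ derive $\Gamma,\Delta,\Gamma'\vdash\delta(v,x.t,y.u)^{\varpi(C)}:C$.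 From $x:A,\Gamma\vdash t:B$ derive $\Gamma\vdash\lambda x.t:A\multimap B$; from $\Gamma\vdash w:A$, $\Delta\vdash v:A\multimap B$ derive $\Gamma,\Delta\vdash(v\,w)^{\varpi(B)}:B$. From $\Gamma\vdash t:A$, $\Gamma\vdash u:B$ derive $\Gamma\vdash\langle t,u\rangle:A\&B$; from $\Gamma\vdash v:A_1\&A_2$ derive $\Gamma\vdash(\pi_iv)^{\varpi(A_i)}:A_i$. The ordered fragment $\mathcal{O}$ consists of derivations not using (struct). Machine: stacks $s ::= \star \mid v^\varepsilon\cdot s \mid \pi_i^\varepsilon\cdot s \mid (x^+.u)^\varepsilon\cdot s$; lists of resources $l ::= []\mid r_n::l$ (the freelist); commands $\langle t\mid s\mid l\rangle^\varepsilon$; $\rightsquigarrow^*$ is the reflexive-transitive closure of the one-step reduction $\rightsquigarrow$ given by ($i\in\{1,2\}$): $\langle(\mathrm{let}\ x^-=v\ \mathrm{in}\ t)^\varepsilon\mid s\mid l\rangle^\varepsilon\rightsquigarrow\langle t[v/x]\mid s\mid l\rangle^\varepsilon$; $\langle(\mathrm{let}\ x^+=t\ \mathrm{in}\ u)^\varepsilon\mid s\mid l\rangle^\varepsilon\rightsquigarrow\langle t\mid (x^+.u)^\varepsilon\cdot s\mid l\rangle^+$; $\langle v\mid (x^+.t)^\varepsilon\cdot s\mid l\rangle^+\rightsquigarrow\langle t[v/x]\mid s\mid l\rangle^\varepsilon$; $\langle (v\,w)^\varepsilon\mid s\mid l\rangle^\varepsilon\rightsquigarrow\langle v\mid w^\varepsilon\cdot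 s\mid l\rangle^-$; $\langle \lambda x.t\mid v^\varepsilon\cdot s\mid l\rangle^-\rightsquigarrow\langle t[v/x]\mid s\mid l\rangle^\varepsilon$; $\langle (\pi_i v)^\varepsilon\mid s\mid l\rangle^\varepsilon\rightsquigarrow\langle v\mid \pi_i^\varepsilon\cdot s\mid l\rangle^-$; $\langle \langle t_1,t_2\rangle\mid \pi_i^\varepsilon\cdot s\mid l\rangle^-\rightsquigarrow\langle t_i\mid s\mid l\rangle^\varepsilon$; $\langle \delta((v,w),(x,y).t)^\varepsilon\mid s\mid l\rangle^\varepsilon\rightsquigarrow\langle t[v/x,w/y]\mid s\mid l\rangle^\varepsilon$; $\langle \delta((),().t)^\varepsilon\mid s\mid l\rangle^\varepsilon\rightsquigarrow\langle t\mid s\mid l\rangle^\varepsilon$; $\langle \delta(\iota_i v,x_1.t_1,x_2.t_2)^\varepsilon\mid s\mid l\rangle^\varepsilon\rightsquigarrow\langle t_i[v/x_i]\mid s\mid l\rangle^\varepsilon$; $\langle \mathrm{new}\mid ()^{\varepsilon}\cdot s\mid r_n::l\rangle^-\rightsquigarrow\langle \iota_1 r_n\mid s\mid l\rangle^+$; $\langle \mathrm{new}\mid ()^{\varepsilon}\cdot s\mid []\rangle^-\rightsquigarrow\langle \iota_2 ()\mid s\mid []\rangle^+$; $\langle \mathrm{delete}\mid r_n^{\varepsilon}\cdot s\mid l\rangle^-\rightsquigarrow\langle ()\mid s\mid r_n::l\rangle^+$. *)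

theory Defs
  imports Main "HOL-Library.Multiset"
begin

datatype pol = Pos | Neg

datatype ty = R | One | Tensor ty ty | Plus ty ty | Lolli ty ty | With ty ty

fun polty :: "ty \<Rightarrow> pol" where
  "polty R = Pos"
| "polty One = Pos"
| "polty (Tensor A B) = Pos"
| "polty (Plus A B) = Pos"
| "polty (Lolli A B) = Neg"
| "polty (With A B) = Neg"

fun central :: "ty \<Rightarrow> bool" where
  "central One = True"
| "central (Tensor A B) = (central A \<and> central B)"
| "central (Plus A B) = (central A \<and> central B)"
| "central _ = False"

type_synonym var = nat

text \<open>LetP x t u e = (let x^+ = t in u)^e, LetN x v u e = (let x^- = v in u)^e,
  DPair v x y t e = delta(v,(x,y).t)^e, DUnit v t e = delta(v,().t)^e,
  DSum v x t y u e = delta(v,x.t,y.u)^e, App v w e = (v w)^e,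
  Proj1 v e = (pi_1 v)^e, Proj2 v e = (pi_2 v)^e,
  Inj1/Inj2 = iota_1/iota_2, Lam x t = lambda x.t, Wth t u = <t,u>, Res n = r_n.\<close>
datatype tm =
    Var var | New | Delete | Res nat
  | Pair tm tm | Unit | Inj1 tm | Inj2 tm | Lam var tm | Wth tm tm
  | LetP var tm tm pol
  | LetN var tm tm pol
  | DPair tm var var tm pol
  | DUnit tm tm pol
  | DSum tm var tm var tm pol
  | App tm tm pol
  | Proj1 tm pol
  | Proj2 tm pol

inductive is_val :: "tm \<Rightarrow> bool" and is_exp :: "tm \<Rightarrow> bool" where
  v_letp: "is_exp t \<Longrightarrow> is_val v \<Longrightarrow> is_val (LetP x t v Neg)"
| v_letn: "is_val v \<Longrightarrow> is_val w \<Longrightarrow> is_val (LetN x v w Neg)"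
| v_dpair: "is_val v \<Longrightarrow> is_val w \<Longrightarrow> is_val (DPair v x y w Neg)"
| v_dunit: "is_val v \<Longrightarrow> is_val w \<Longrightarrow> is_val (DUnit v w Neg)"
| v_dsum: "is_val v \<Longrightarrow> is_val w \<Longrightarrow> is_val w' \<Longrightarrow> is_val (DSum v x w y w' Neg)"
| v_app: "is_val v \<Longrightarrow> is_val w \<Longrightarrow> is_val (App v w Neg)"
| v_proj1: "is_val v \<Longrightarrow> is_val (Proj1 v Neg)"
| v_proj2: "is_val v \<Longrightarrow> is_val (Proj2 v Neg)"
| v_var: "is_val (Var x)"
| v_new: "is_val New"
| v_delete: "is_val Delete"
| v_pair: "is_val v \<Longrightarrow> is_val w \<Longrightarrow> is_val (Pair v w)"
| v_unit: "is_val Unit"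
| v_inj1: "is_val v \<Longrightarrow> is_val (Inj1 v)"
| v_inj2: "is_val v \<Longrightarrow> is_val (Inj2 v)"
| v_lam: "is_exp t \<Longrightarrow> is_val (Lam x t)"
| v_wth: "is_exp t \<Longrightarrow> is_exp u \<Longrightarrow> is_val (Wth t u)"
| v_res: "is_val (Res n)"
| e_val: "is_val v \<Longrightarrow> is_exp v"
| e_letp: "is_exp t \<Longrightarrow> is_exp u \<Longrightarrow> is_exp (LetP x t u Pos)"
| e_letn: "is_val v \<Longrightarrow> is_exp u \<Longrightarrow> is_exp (LetN x v u Pos)"
| e_dpair: "is_val v \<Longrightarrow> is_exp t \<Longrightarrow> is_exp (DPair v x y t Pos)"
| e_dunit: "is_val v \<Longrightarrow> is_exp t \<Longrightarrow> is_exp (DUnit v t Pos)"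
| e_dsum: "is_val v \<Longrightarrow> is_exp t \<Longrightarrow> is_exp u \<Longrightarrow> is_exp (DSum v x t y u Pos)"
| e_app: "is_val v \<Longrightarrow> is_val w \<Longrightarrow> is_exp (App v w Pos)"
| e_proj1: "is_val v \<Longrightarrow> is_exp (Proj1 v Pos)"
| e_proj2: "is_val v \<Longrightarrow> is_exp (Proj2 v Pos)"

text \<open>Binders shadow; no renaming of binders is performed,
  so this is capture-avoiding whenever v is closed, which is the case for every
  substitution performed by the machine on configurations reachable from a closed
  expression with the empty stack.\<close>
fun subst :: "tm \<Rightarrow> var \<Rightarrow> tm \<Rightarrow> tm" where
  "subst (Var y) x v = (if y = x then v else Var y)"
| "subst New x v = New"
| "subst Delete x v = Delete"
| "subst (Res n) x v = Res n"
| "subst (Pair a b) x v = Pair (subst a x v) (subst b x v)"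
| "subst Unit x v = Unit"
| "subst (Inj1 a) x v = Inj1 (subst a x v)"
| "subst (Inj2 a) x v = Inj2 (subst a x v)"
| "subst (Lam y a) x v = Lam y (if y = x then a else subst a x v)"
| "subst (Wth a b) x v = Wth (subst a x v) (subst b x v)"
| "subst (LetP y a b e) x v = LetP y (subst a x v) (if y = x then b else subst b x v) e"
| "subst (LetN y a b e) x v = LetN y (subst a x v) (if y = x then b else subst b x v) e"
| "subst (DPair a y z b e) x v =
     DPair (subst a x v) y z (if y = x \<or> z = x then b else subst b x v) e"
| "subst (DUnit a b e) x v = DUnit (subst a x v) (subst b x v) e"
| "subst (DSum a y b z c e) x v =
     DSum (subst a x v) y (if y = x then b else subst b x v) z (if z = x then c else subst c x v) e"
| "subst (App a b e) x v = App (subst a x v) (subst b x v) e"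
| "subst (Proj1 a e) x v = Proj1 (subst a x v) e"
| "subst (Proj2 a e) x v = Proj2 (subst a x v) e"

text \<open>Renaming of all variable occurrences (free and bound) by a function f; for a
  bijection f this is (up to alpha-equivalence) the capture-avoiding renaming t[sigma].\<close>
fun ren :: "(var \<Rightarrow> var) \<Rightarrow> tm \<Rightarrow> tm" where
  "ren f (Var y) = Var (f y)"
| "ren f New = New"
| "ren f Delete = Delete"
| "ren f (Res n) = Res n"
| "ren f (Pair a b) = Pair (ren f a) (ren f b)"
| "ren f Unit = Unit"
| "ren f (Inj1 a) = Inj1 (ren f a)"
| "ren f (Inj2 a) = Inj2 (ren f a)"
| "ren f (Lam y a) = Lam (f y) (ren f a)"
| "ren f (Wth a b) = Wth (ren f a) (ren f b)"
| "ren f (LetP y a b e) = LetP (f y) (ren f a) (ren f b) e"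
| "ren f (LetN y a b e) = LetN (f y) (ren f a) (ren f b) e"
| "ren f (DPair a y z b e) = DPair (ren f a) (f y) (f z) (ren f b) e"
| "ren f (DUnit a b e) = DUnit (ren f a) (ren f b) e"
| "ren f (DSum a y b z c e) = DSum (ren f a) (f y) (ren f b) (f z) (ren f c) e"
| "ren f (App a b e) = App (ren f a) (ren f b) e"
| "ren f (Proj1 a e) = Proj1 (ren f a) e"
| "ren f (Proj2 a e) = Proj2 (ren f a) e"

type_synonym ctx = "(var \<times> ty) list"

definition ctx_ok :: "ctx \<Rightarrow> bool" where
  "ctx_ok G \<longleftrightarrow> distinct (map fst G)"

text \<open>has_ty b G t A: G |- t : A.  The flag b says whether rule (struct) may be used:
  has_ty True is the full system L, has_ty False is the ordered fragment O.\<close>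
inductive has_ty :: "bool \<Rightarrow> ctx \<Rightarrow> tm \<Rightarrow> ty \<Rightarrow> bool" where
  t_var: "has_ty b [(x, A)] (Var x) A"
| t_struct: "has_ty True G t A \<Longrightarrow> bij f \<Longrightarrow>
     mset G' = mset (map (\<lambda>(x, B). (f x, B)) G) \<Longrightarrow> has_ty True G' (ren f t) A"
| t_new: "has_ty b [] New (Lolli One (Plus R One))"
| t_delete: "has_ty b [] Delete (Lolli R One)"
| t_letp: "has_ty b D t A \<Longrightarrow> has_ty b (G @ [(x, A)]) u B \<Longrightarrow> polty A = Pos \<Longrightarrow>
     ctx_ok (G @ D) \<Longrightarrow> ctx_ok (G @ [(x, A)]) \<Longrightarrow> ctx_ok D \<Longrightarrow>
     has_ty b (G @ D) (LetP x t u (polty B)) B"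
| t_letn: "has_ty b D t A \<Longrightarrow> has_ty b (G @ [(x, A)]) u B \<Longrightarrow> polty A = Neg \<Longrightarrow>
     ctx_ok (G @ D) \<Longrightarrow> ctx_ok (G @ [(x, A)]) \<Longrightarrow> ctx_ok D \<Longrightarrow>
     has_ty b (G @ D) (LetN x t u (polty B)) B"
| t_pair: "is_val v \<Longrightarrow> is_val w \<Longrightarrow> has_ty b G v A \<Longrightarrow> has_ty b D w B \<Longrightarrow>
     ctx_ok G \<Longrightarrow> ctx_ok D \<Longrightarrow> ctx_ok (G @ D) \<Longrightarrow>
     has_ty b (G @ D) (Pair v w) (Tensor A B)"
| t_dpair: "is_val v \<Longrightarrow> has_ty b D v (Tensor A B) \<Longrightarrow>
     has_ty b (G @ [(x, A), (y, B)] @ G') t C \<Longrightarrow>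
     ctx_ok D \<Longrightarrow> ctx_ok (G @ [(x, A), (y, B)] @ G') \<Longrightarrow> ctx_ok (G @ D @ G') \<Longrightarrow>
     has_ty b (G @ D @ G') (DPair v x y t (polty C)) C"
| t_unit: "has_ty b [] Unit One"
| t_dunit: "is_val v \<Longrightarrow> has_ty b D v One \<Longrightarrow> has_ty b (G @ G') t A \<Longrightarrow>
     ctx_ok D \<Longrightarrow> ctx_ok (G @ G') \<Longrightarrow> ctx_ok (G @ D @ G') \<Longrightarrow>
     has_ty b (G @ D @ G') (DUnit v t (polty A)) A"
| t_inj1: "is_val v \<Longrightarrow> has_ty b G v A \<Longrightarrow> has_ty b G (Inj1 v) (Plus A B)"
| t_inj2: "is_val v \<Longrightarrow> has_ty b G v B \<Longrightarrow> has_ty b G (Inj2 v) (Plus A B)"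
| t_dsum: "is_val v \<Longrightarrow> has_ty b D v (Plus A B) \<Longrightarrow>
     has_ty b (G @ [(x, A)] @ G') t C \<Longrightarrow> has_ty b (G @ [(y, B)] @ G') u C \<Longrightarrow>
     ctx_ok D \<Longrightarrow> ctx_ok (G @ [(x, A)] @ G') \<Longrightarrow> ctx_ok (G @ [(y, B)] @ G') \<Longrightarrow>
     ctx_ok (G @ D @ G') \<Longrightarrow>
     has_ty b (G @ D @ G') (DSum v x t y u (polty C)) C"
| t_lam: "has_ty b ((x, A) # G) t B \<Longrightarrow> ctx_ok ((x, A) # G) \<Longrightarrow>
     has_ty b G (Lam x t) (Lolli A B)"
| t_app: "is_val w \<Longrightarrow> is_val v \<Longrightarrow> has_ty b G w A \<Longrightarrow> has_ty b D v (Lolli A B) \<Longrightarrow>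
     ctx_ok G \<Longrightarrow> ctx_ok D \<Longrightarrow> ctx_ok (G @ D) \<Longrightarrow>
     has_ty b (G @ D) (App v w (polty B)) B"
| t_wth: "has_ty b G t A \<Longrightarrow> has_ty b G u B \<Longrightarrow> ctx_ok G \<Longrightarrow> has_ty b G (Wth t u) (With A B)"
| t_proj1: "is_val v \<Longrightarrow> has_ty b G v (With A1 A2) \<Longrightarrow> has_ty b G (Proj1 v (polty A1)) A1"
| t_proj2: "is_val v \<Longrightarrow> has_ty b G v (With A1 A2) \<Longrightarrow> has_ty b G (Proj2 v (polty A2)) A2"

text \<open>Stacks: Star, SVal v e = v^e . s, SProj1/2 e = pi_i^e . s, SLet x u e = (x^+.u)^e . s.\<close>
datatype stack = Star | SVal tm pol stack | SProj1 pol stack | SProj2 pol stack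
  | SLet var tm pol stack

text \<open>Freelists l are lists of resources r_n, represented by the list of indices n.\<close>
type_synonym freelist = "nat list"

text \<open>A command <t | s | l>^e is represented as (t, s, l, e).\<close>
type_synonym cmd = "tm \<times> stack \<times> freelist \<times> pol"

inductive step :: "cmd \<Rightarrow> cmd \<Rightarrow> bool" where
  s_letn: "step (LetN x v t e, s, l, e) (subst t x v, s, l, e)"
| s_letp: "step (LetP x t u e, s, l, e) (t, SLet x u e s, l, Pos)"
| s_ret: "is_val v \<Longrightarrow> step (v, SLet x t e s, l, Pos) (subst t x v, s, l, e)"
| s_app: "step (App v w e, s, l, e) (v, SVal w e s, l, Neg)"
| s_lam: "step (Lam x t, SVal v e s, l, Neg) (subst t x v, s, l, e)"
| s_proj1: "step (Proj1 v e, s, l, e) (v, SProj1 e s, l, Neg)"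
| s_proj2: "step (Proj2 v e, s, l, e) (v, SProj2 e s, l, Neg)"
| s_wth1: "step (Wth t1 t2, SProj1 e s, l, Neg) (t1, s, l, e)"
| s_wth2: "step (Wth t1 t2, SProj2 e s, l, Neg) (t2, s, l, e)"
| s_dpair: "step (DPair (Pair v w) x y t e, s, l, e) (subst (subst t x v) y w, s, l, e)"
| s_dunit: "step (DUnit Unit t e, s, l, e) (t, s, l, e)"
| s_dsum1: "step (DSum (Inj1 v) x1 t1 x2 t2 e, s, l, e) (subst t1 x1 v, s, l, e)"
| s_dsum2: "step (DSum (Inj2 v) x1 t1 x2 t2 e, s, l, e) (subst t2 x2 v, s, l, e)"
| s_new1: "step (New, SVal Unit e s, n # l, Neg) (Inj1 (Res n), s, l, Pos)"
| s_new2: "step (New, SVal Unit e s, [], Neg) (Inj2 Unit, s, [], Pos)"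
| s_delete: "step (Delete, SVal (Res n) e s, l, Neg) (Unit, s, n # l, Pos)"

abbreviation steps :: "cmd \<Rightarrow> cmd \<Rightarrow> bool" where
  "steps \<equiv> step\<^sup>*\<^sup>*"

end

theory Submission
  imports Defs
begin

text \<open>Type configurations with contexts that may also contain resources r_n : R. A command
  \<langle>t | s | l\<rangle> is typed by an ordered context S @ D, where the stack s uses S and the focused
  term t uses D. Because there is no exchange, the resources of S, then those of D, then the
  freelist l, read in this order, always form the initial freelist: new moves the head of l
  into the (otherwise empty) context of the term it returns, delete moves the resource of its
  argument back onto l, and substituting a closed value splices its resources in at the
  position of the variable. On a final command the stack is empty, and a value of central type
  holds no resources, so the freelist is the initial one.\<close>

datatype atom = AVar var | ARes nat

type_synonym actx = "(atom \<times> ty) list"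

fun ctx_vars :: "actx \<Rightarrow> var list" where
  "ctx_vars [] = []"
| "ctx_vars ((AVar x, _) # S) = x # ctx_vars S"
| "ctx_vars ((ARes _, _) # S) = ctx_vars S"

fun ctx_res :: "actx \<Rightarrow> nat list" where
  "ctx_res [] = []"
| "ctx_res ((AVar _, _) # S) = ctx_res S"
| "ctx_res ((ARes n, _) # S) = n # ctx_res S"

lemma ctx_vars_append [simp]: "ctx_vars (S @ S') = ctx_vars S @ ctx_vars S'"
  by (induction S rule: ctx_vars.induct) auto

lemma ctx_res_append [simp]: "ctx_res (S @ S') = ctx_res S @ ctx_res S'"
  by (induction S rule: ctx_res.induct) auto

lemma AVar_in_ctx_vars: "(AVar x, A) \<in> set S \<Longrightarrow> x \<in> set (ctx_vars S)"
  by (induction S rule: ctx_vars.induct) auto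

text \<open>Ordered typing over contexts of variables and resources: the rules of the fragment O,
  plus one for r_n, without the side conditions on values and polarities, which the argument
  does not need.\<close>

inductive rty :: "actx \<Rightarrow> tm \<Rightarrow> ty \<Rightarrow> bool" where
  rty_var: "rty [(AVar x, A)] (Var x) A"
| rty_res: "rty [(ARes n, R)] (Res n) R"
| rty_new: "rty [] New (Lolli One (Plus R One))"
| rty_delete: "rty [] Delete (Lolli R One)"
| rty_letp: "rty D t A \<Longrightarrow> rty (G @ [(AVar x, A)]) u B \<Longrightarrow> distinct (ctx_vars (G @ D)) \<Longrightarrow>
     rty (G @ D) (LetP x t u (polty B)) B"
| rty_letn: "rty D t A \<Longrightarrow> rty (G @ [(AVar x, A)]) u B \<Longrightarrow> distinct (ctx_vars (G @ D)) \<Longrightarrow>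
     rty (G @ D) (LetN x t u (polty B)) B"
| rty_pair: "rty G v A \<Longrightarrow> rty D w B \<Longrightarrow> distinct (ctx_vars (G @ D)) \<Longrightarrow>
     rty (G @ D) (Pair v w) (Tensor A B)"
| rty_dpair: "rty D v (Tensor A B) \<Longrightarrow> rty (G @ (AVar x, A) # (AVar y, B) # G') t C \<Longrightarrow>
     distinct (ctx_vars (G @ D @ G')) \<Longrightarrow> rty (G @ D @ G') (DPair v x y t (polty C)) C"
| rty_unit: "rty [] Unit One"
| rty_dunit: "rty D v One \<Longrightarrow> rty (G @ G') t A \<Longrightarrow> distinct (ctx_vars (G @ D @ G')) \<Longrightarrow>
     rty (G @ D @ G') (DUnit v t (polty A)) A"
| rty_inj1: "rty G v A \<Longrightarrow> rty G (Inj1 v) (Plus A B)"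
| rty_inj2: "rty G v B \<Longrightarrow> rty G (Inj2 v) (Plus A B)"
| rty_dsum: "rty D v (Plus A B) \<Longrightarrow> rty (G @ (AVar x, A) # G') t C \<Longrightarrow>
     rty (G @ (AVar y, B) # G') u C \<Longrightarrow> distinct (ctx_vars (G @ D @ G')) \<Longrightarrow>
     rty (G @ D @ G') (DSum v x t y u (polty C)) C"
| rty_lam: "rty ((AVar x, A) # G) t B \<Longrightarrow> rty G (Lam x t) (Lolli A B)"
| rty_app: "rty G w A \<Longrightarrow> rty D v (Lolli A B) \<Longrightarrow> distinct (ctx_vars (G @ D)) \<Longrightarrow>
     rty (G @ D) (App v w (polty B)) B"
| rty_wth: "rty G t A \<Longrightarrow> rty G u B \<Longrightarrow> rty G (Wth t u) (With A B)"
| rty_proj1: "rty G v (With A1 A2) \<Longrightarrow> rty G (Proj1 v (polty A1)) A1"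
| rty_proj2: "rty G v (With A1 A2) \<Longrightarrow> rty G (Proj2 v (polty A2)) A2"

lemma rty_distinct_vars: "rty S t A \<Longrightarrow> distinct (ctx_vars S)"
  by (induction rule: rty.induct) auto

lemma subst_fresh: "rty S t A \<Longrightarrow> x \<notin> set (ctx_vars S) \<Longrightarrow> subst t x v = t"
  by (induction rule: rty.induct) auto

fun ctx_subst :: "var \<Rightarrow> actx \<Rightarrow> actx \<Rightarrow> actx" where
  "ctx_subst x D [] = []"
| "ctx_subst x D ((a, A) # S) = (if a = AVar x then D else [(a, A)]) @ ctx_subst x D S"

lemma ctx_subst_append [simp]: "ctx_subst x D (S @ S') = ctx_subst x D S @ ctx_subst x D S'"
  by (induction S) auto

lemma ctx_subst_fresh [simp]: "x \<notin> set (ctx_vars S) \<Longrightarrow> ctx_subst x D S = S"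
  by (induction S rule: ctx_vars.induct) auto

lemma ctx_vars_ctx_subst [simp]:
  "ctx_vars D = [] \<Longrightarrow> ctx_vars (ctx_subst x D S) = removeAll x (ctx_vars S)"
  by (induction S rule: ctx_vars.induct) auto

lemma distinct_ctx_vars_ctx_subst:
  "ctx_vars D = [] \<Longrightarrow> distinct (ctx_vars S) \<Longrightarrow> distinct (ctx_vars (ctx_subst x D S))"
  by (simp add: distinct_removeAll)

lemma AVar_in_append_cases:
  assumes "(AVar x, A) \<in> set (G @ D)" "distinct (ctx_vars (G @ D))"
  obtains (left) "(AVar x, A) \<in> set G" "x \<notin> set (ctx_vars D)"
    | (right) "(AVar x, A) \<in> set D" "x \<notin> set (ctx_vars G)"
  using assms AVar_in_ctx_vars by fastforce

lemma AVar_in_middle_cases: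
  assumes "(AVar x, A) \<in> set (G @ D @ G')" "distinct (ctx_vars (G @ D @ G'))"
  obtains (outer) "(AVar x, A) \<in> set (G @ G')" "x \<notin> set (ctx_vars D)"
    | (middle) "(AVar x, A) \<in> set D" "x \<notin> set (ctx_vars (G @ G'))"
  using assms AVar_in_ctx_vars by fastforce

text \<open>Substituting a closed value (ctx_vars D = []) cannot capture, so the substitution of the
  machine, which does not rename binders, is sound here.\<close>

lemma rty_subst:
  assumes "rty S t C" "(AVar x, A) \<in> set S" "rty D v A" "ctx_vars D = []"
  shows "rty (ctx_subst x D S) (subst t x v) C"
  using assms
proof (induction rule: rty.induct)
  case (rty_lam y A0 G t0 B)
  have "distinct (ctx_vars ((AVar y, A0) # G))"
    using rty_lam.hyps by (rule rty_distinct_vars)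
  with rty_lam.prems(1) have "x \<noteq> y" using AVar_in_ctx_vars by fastforce
  with rty_lam show ?case by (auto intro: rty.rty_lam)
next
  case (rty_letp D0 t0 A0 G y u B)
  have u_distinct: "distinct (ctx_vars (G @ [(AVar y, A0)]))"
    using rty_letp.hyps(2) by (rule rty_distinct_vars)
  from rty_letp.prems(1) rty_letp.hyps(3) show ?case
  proof (cases rule: AVar_in_append_cases)
    case left
    with u_distinct have "x \<noteq> y" using AVar_in_ctx_vars by fastforce
    with left rty_letp show ?thesis
      using subst_fresh[OF rty_letp.hyps(1)] distinct_ctx_vars_ctx_subst[of D "G @ D0" x]
      by (auto intro!: rty.rty_letp)
  next
    case right
    with rty_letp show ?thesis
      using subst_fresh[OF rty_letp.hyps(2), of x] distinct_ctx_vars_ctx_subst[of D "G @ D0" x]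
      by (auto intro!: rty.rty_letp)
  qed
next
  case (rty_letn D0 t0 A0 G y u B)
  have u_distinct: "distinct (ctx_vars (G @ [(AVar y, A0)]))"
    using rty_letn.hyps(2) by (rule rty_distinct_vars)
  from rty_letn.prems(1) rty_letn.hyps(3) show ?case
  proof (cases rule: AVar_in_append_cases)
    case left
    with u_distinct have "x \<noteq> y" using AVar_in_ctx_vars by fastforce
    with left rty_letn show ?thesis
      using subst_fresh[OF rty_letn.hyps(1)] distinct_ctx_vars_ctx_subst[of D "G @ D0" x]
      by (auto intro!: rty.rty_letn)
  next
    case right
    with rty_letn show ?thesis
      using subst_fresh[OF rty_letn.hyps(2), of x] distinct_ctx_vars_ctx_subst[of D "G @ D0" x]
      by (auto intro!: rty.rty_letn)
  qed
next
  case (rty_pair G v0 A0 D0 w0 B0)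
  from rty_pair.prems(1) rty_pair.hyps(3) show ?case
    by (cases rule: AVar_in_append_cases)
      (use rty_pair subst_fresh[OF rty_pair.hyps(1)] subst_fresh[OF rty_pair.hyps(2)]
         distinct_ctx_vars_ctx_subst[of D "G @ D0" x] in \<open>auto intro!: rty.rty_pair\<close>)
next
  case (rty_app G w0 A0 D0 v0 B0)
  from rty_app.prems(1) rty_app.hyps(3) show ?case
    by (cases rule: AVar_in_append_cases)
      (use rty_app subst_fresh[OF rty_app.hyps(1)] subst_fresh[OF rty_app.hyps(2)]
         distinct_ctx_vars_ctx_subst[of D "G @ D0" x] in \<open>auto intro!: rty.rty_app\<close>)
next
  case (rty_dunit D0 v0 G G' t0 A0)
  from rty_dunit.prems(1) rty_dunit.hyps(3) show ?case
    by (cases rule: AVar_in_middle_cases)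
      (use rty_dunit subst_fresh[OF rty_dunit.hyps(1)] subst_fresh[OF rty_dunit.hyps(2)]
         distinct_ctx_vars_ctx_subst[of D "G @ D0 @ G'" x] in \<open>auto intro!: rty.rty_dunit\<close>)
next
  case (rty_dpair D0 v0 A0 B0 G y z G' t0 C)
  have t_distinct: "distinct (ctx_vars (G @ (AVar y, A0) # (AVar z, B0) # G'))"
    using rty_dpair.hyps(2) by (rule rty_distinct_vars)
  from rty_dpair.prems(1) rty_dpair.hyps(3) show ?case
  proof (cases rule: AVar_in_middle_cases)
    case outer
    with t_distinct have "x \<noteq> y" "x \<noteq> z" using AVar_in_ctx_vars by fastforce+
    with outer rty_dpair show ?thesis
      using subst_fresh[OF rty_dpair.hyps(1)] distinct_ctx_vars_ctx_subst[of D "G @ D0 @ G'" x]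
      by (auto intro!: rty.rty_dpair)
  next
    case middle
    with rty_dpair show ?thesis
      using subst_fresh[OF rty_dpair.hyps(2), of x] distinct_ctx_vars_ctx_subst[of D "G @ D0 @ G'" x]
      by (auto intro!: rty.rty_dpair)
  qed
next
  case (rty_dsum D0 v0 A0 B0 G y G' t0 C z u0)
  have t_distinct: "distinct (ctx_vars (G @ (AVar y, A0) # G'))"
    using rty_dsum.hyps(2) by (rule rty_distinct_vars)
  have u_distinct: "distinct (ctx_vars (G @ (AVar z, B0) # G'))"
    using rty_dsum.hyps(3) by (rule rty_distinct_vars)
  from rty_dsum.prems(1) rty_dsum.hyps(4) show ?case
  proof (cases rule: AVar_in_middle_cases)
    case outer
    with t_distinct u_distinct have "x \<noteq> y" "x \<noteq> z" using AVar_in_ctx_vars by fastforce+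
    with outer rty_dsum show ?thesis
      using subst_fresh[OF rty_dsum.hyps(1)] distinct_ctx_vars_ctx_subst[of D "G @ D0 @ G'" x]
      by (auto intro!: rty.rty_dsum)
  next
    case middle
    with rty_dsum show ?thesis
      using subst_fresh[OF rty_dsum.hyps(2), of x] subst_fresh[OF rty_dsum.hyps(3), of x]
        distinct_ctx_vars_ctx_subst[of D "G @ D0 @ G'" x]
      by (auto intro!: rty.rty_dsum)
  qed
qed (auto intro: rty.intros)

lemma rty_subst_closed:
  assumes "rty (G @ (AVar x, A) # G') t C" "rty D v A" "ctx_vars D = []"
  shows "rty (G @ D @ G') (subst t x v) C"
  using rty_subst[OF assms(1), of x A D v] assms(2,3) rty_distinct_vars[OF assms(1)] by simp

text \<open>stack_ty S s A W: the stack s, holding the resources in S, turns a term of type A into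
  one of type W.\<close>

inductive stack_ty :: "actx \<Rightarrow> stack \<Rightarrow> ty \<Rightarrow> ty \<Rightarrow> bool" where
  stack_ty_star: "stack_ty [] Star W W"
| stack_ty_let: "rty (G @ [(AVar x, A)]) u B \<Longrightarrow> stack_ty S s B W \<Longrightarrow>
     stack_ty (S @ G) (SLet x u e s) A W"
| stack_ty_val: "rty G w A \<Longrightarrow> stack_ty S s B W \<Longrightarrow>
     stack_ty (S @ G) (SVal w e s) (Lolli A B) W"
| stack_ty_proj1: "stack_ty S s A1 W \<Longrightarrow> stack_ty S (SProj1 e s) (With A1 A2) W"
| stack_ty_proj2: "stack_ty S s A2 W \<Longrightarrow> stack_ty S (SProj2 e s) (With A1 A2) W"

inductive_cases stack_ty_StarE: "stack_ty S Star A W"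
inductive_cases stack_ty_SLetE: "stack_ty S (SLet x u e s) A W"
inductive_cases stack_ty_SValE: "stack_ty S (SVal w e s) A W"
inductive_cases stack_ty_SProj1E: "stack_ty S (SProj1 e s) A W"
inductive_cases stack_ty_SProj2E: "stack_ty S (SProj2 e s) A W"

inductive_cases rty_LetPE: "rty S (LetP x t u e) B"
inductive_cases rty_LetNE: "rty S (LetN x t u e) B"
inductive_cases rty_AppE: "rty S (App v w e) B"
inductive_cases rty_LamE: "rty S (Lam x t) B"
inductive_cases rty_Proj1E: "rty S (Proj1 v e) B"
inductive_cases rty_Proj2E: "rty S (Proj2 v e) B"
inductive_cases rty_WthE: "rty S (Wth t u) B"
inductive_cases rty_DPairE: "rty S (DPair v x y t e) B"
inductive_cases rty_PairE: "rty S (Pair v w) B"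
inductive_cases rty_DUnitE: "rty S (DUnit v t e) B"
inductive_cases rty_UnitE: "rty S Unit B"
inductive_cases rty_DSumE: "rty S (DSum v x t y u e) B"
inductive_cases rty_Inj1E: "rty S (Inj1 v) B"
inductive_cases rty_Inj2E: "rty S (Inj2 v) B"
inductive_cases rty_NewE: "rty S New B"
inductive_cases rty_DeleteE: "rty S Delete B"
inductive_cases rty_ResE: "rty S (Res n) B"

lemma rty_LetN_contract: "rty D (LetN x v t e) A \<Longrightarrow> ctx_vars D = [] \<Longrightarrow> rty D (subst t x v) A"
  using rty_subst_closed[where G' = "[]"] by (fastforce elim: rty_LetNE)

lemma rty_DPair_contract:
  assumes "rty D (DPair (Pair v w) x y t e) C" "ctx_vars D = []"
  shows "rty D (subst (subst t x v) y w) C"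
proof -
  from assms(1) obtain G D1 D2 G' A B where D: "D = G @ D1 @ D2 @ G'" "rty D1 v A" "rty D2 w B"
    and t: "rty (G @ (AVar x, A) # (AVar y, B) # G') t C"
    by (auto elim!: rty_DPairE rty_PairE)
  from t D assms(2) have "rty (G @ D1 @ (AVar y, B) # G') (subst t x v) C"
    by (auto intro: rty_subst_closed)
  then show ?thesis
    using rty_subst_closed[of "G @ D1" y B G' "subst t x v" C D2 w] D assms(2) by simp
qed

lemma rty_DUnit_contract: "rty D (DUnit Unit t e) A \<Longrightarrow> rty D t A"
  by (auto elim!: rty_DUnitE rty_UnitE)

lemma rty_DSum_Inj1_contract:
  "rty D (DSum (Inj1 v) x1 t1 x2 t2 e) C \<Longrightarrow> ctx_vars D = [] \<Longrightarrow> rty D (subst t1 x1 v) C"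
  by (auto elim!: rty_DSumE rty_Inj1E intro: rty_subst_closed)

lemma rty_DSum_Inj2_contract:
  "rty D (DSum (Inj2 v) x1 t1 x2 t2 e) C \<Longrightarrow> ctx_vars D = [] \<Longrightarrow> rty D (subst t2 x2 v) C"
  by (auto elim!: rty_DSumE rty_Inj2E intro: rty_subst_closed)

inductive cfg_inv :: "freelist \<Rightarrow> ty \<Rightarrow> cmd \<Rightarrow> bool" where
  cfg_invI: "stack_ty S s A W \<Longrightarrow> rty D t A \<Longrightarrow> ctx_vars (S @ D) = [] \<Longrightarrow>
    l0 = ctx_res (S @ D) @ l \<Longrightarrow> cfg_inv l0 W (t, s, l, e)"

lemma cfg_inv_contract:
  assumes "cfg_inv l0 W (t, s, l, e)"
    and "\<And>D A. rty D t A \<Longrightarrow> ctx_vars D = [] \<Longrightarrow> rty D t' A"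
  shows "cfg_inv l0 W (t', s, l, e')"
  using assms by (auto elim!: cfg_inv.cases intro!: cfg_invI)

lemma cfg_inv_ret:
  assumes "cfg_inv l0 W (v, SLet x t e s, l, Pos)"
  shows "cfg_inv l0 W (subst t x v, s, l, e)"
proof -
  from assms obtain S D A where inv: "stack_ty S (SLet x t e s) A W" "rty D v A"
    "ctx_vars (S @ D) = []" "l0 = ctx_res (S @ D) @ l" by (auto elim: cfg_inv.cases)
  from inv(1) obtain S' G B where "S = S' @ G" "rty (G @ [(AVar x, A)]) t B" "stack_ty S' s B W"
    by (auto elim: stack_ty_SLetE)
  with inv show ?thesis using rty_subst_closed[of G x A "[]" t B D v]
    by (auto intro!: cfg_invI[of S' _ B _ "G @ D"])
qed

lemma cfg_inv_lam:
  assumes "cfg_inv l0 W (Lam x t, SVal v e s, l, Neg)"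
  shows "cfg_inv l0 W (subst t x v, s, l, e)"
proof -
  from assms obtain S D A where inv: "stack_ty S (SVal v e s) A W" "rty D (Lam x t) A"
    "ctx_vars (S @ D) = []" "l0 = ctx_res (S @ D) @ l" by (auto elim: cfg_inv.cases)
  from inv(2) obtain A1 B where A: "A = Lolli A1 B" "rty ((AVar x, A1) # D) t B"
    by (auto elim: rty_LamE)
  from inv(1) A(1) obtain S' G where "S = S' @ G" "rty G v A1" "stack_ty S' s B W"
    by (auto elim: stack_ty_SValE)
  with inv A show ?thesis using rty_subst_closed[of "[]" x A1 D t B G v]
    by (auto intro!: cfg_invI[of S' _ B _ "G @ D"])
qed

lemma cfg_inv_new_cons:
  assumes "cfg_inv l0 W (New, SVal Unit e s, n # l, Neg)"
  shows "cfg_inv l0 W (Inj1 (Res n), s, l, Pos)"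
proof -
  from assms obtain S D A where inv: "stack_ty S (SVal Unit e s) A W" "rty D New A"
    "ctx_vars (S @ D) = []" "l0 = ctx_res (S @ D) @ n # l" by (auto elim: cfg_inv.cases)
  from inv(2) have "D = []" "A = Lolli One (Plus R One)" by (auto elim: rty_NewE)
  with inv(1) obtain S' G where "S = S' @ G" "rty G Unit One" "stack_ty S' s (Plus R One) W"
    by (auto elim: stack_ty_SValE)
  with inv \<open>D = []\<close> show ?thesis
    by (auto elim!: rty_UnitE intro!: cfg_invI[of S' _ "Plus R One" _ "[(ARes n, R)]"] rty.intros)
qed

lemma cfg_inv_new_nil:
  assumes "cfg_inv l0 W (New, SVal Unit e s, [], Neg)"
  shows "cfg_inv l0 W (Inj2 Unit, s, [], Pos)"
proof -
  from assms obtain S D A where inv: "stack_ty S (SVal Unit e s) A W" "rty D New A"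
    "ctx_vars (S @ D) = []" "l0 = ctx_res (S @ D)" by (auto elim: cfg_inv.cases)
  from inv(2) have "D = []" "A = Lolli One (Plus R One)" by (auto elim: rty_NewE)
  with inv(1) obtain S' G where "S = S' @ G" "rty G Unit One" "stack_ty S' s (Plus R One) W"
    by (auto elim: stack_ty_SValE)
  with inv \<open>D = []\<close> show ?thesis
    by (auto elim!: rty_UnitE intro!: cfg_invI[of S' _ "Plus R One" _ "[]"] rty.intros)
qed

lemma cfg_inv_delete:
  assumes "cfg_inv l0 W (Delete, SVal (Res n) e s, l, Neg)"
  shows "cfg_inv l0 W (Unit, s, n # l, Pos)"
proof -
  from assms obtain S D A where inv: "stack_ty S (SVal (Res n) e s) A W" "rty D Delete A"
    "ctx_vars (S @ D) = []" "l0 = ctx_res (S @ D) @ l" by (auto elim: cfg_inv.cases)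
  from inv(2) have "D = []" "A = Lolli R One" by (auto elim: rty_DeleteE)
  with inv(1) obtain S' G where "S = S' @ G" "rty G (Res n) R" "stack_ty S' s One W"
    by (auto elim: stack_ty_SValE)
  with inv \<open>D = []\<close> show ?thesis
    by (auto elim!: rty_ResE intro!: cfg_invI[of S' _ One _ "[]"] rty.intros)
qed

lemma step_preserves_cfg_inv: "step c c' \<Longrightarrow> cfg_inv l0 W c \<Longrightarrow> cfg_inv l0 W c'"
proof (induction rule: step.induct)
  case (s_letn x v t e s l)
  then show ?case by (rule cfg_inv_contract) (rule rty_LetN_contract)
next
  case (s_letp x t u e s l)
  then show ?case by (auto elim!: cfg_inv.cases rty_LetPE intro!: cfg_invI stack_ty_let)
next
  case (s_ret v x t e s l)
  from s_ret.prems show ?case by (rule cfg_inv_ret)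
next
  case (s_app v w e s l)
  then show ?case by (auto elim!: cfg_inv.cases rty_AppE intro!: cfg_invI stack_ty_val)
next
  case (s_lam x t v e s l)
  then show ?case by (rule cfg_inv_lam)
next
  case (s_proj1 v e s l)
  then show ?case by (auto elim!: cfg_inv.cases rty_Proj1E intro!: cfg_invI stack_ty_proj1)
next
  case (s_proj2 v e s l)
  then show ?case by (auto elim!: cfg_inv.cases rty_Proj2E intro!: cfg_invI stack_ty_proj2)
next
  case (s_wth1 t1 t2 e s l)
  then show ?case by (auto elim!: cfg_inv.cases stack_ty_SProj1E rty_WthE intro!: cfg_invI)
next
  case (s_wth2 t1 t2 e s l)
  then show ?case by (auto elim!: cfg_inv.cases stack_ty_SProj2E rty_WthE intro!: cfg_invI)
next
  case (s_dpair v w x y t e s l)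
  then show ?case by (rule cfg_inv_contract) (rule rty_DPair_contract)
next
  case (s_dunit t e s l)
  then show ?case by (rule cfg_inv_contract) (rule rty_DUnit_contract)
next
  case (s_dsum1 v x1 t1 x2 t2 e s l)
  then show ?case by (rule cfg_inv_contract) (rule rty_DSum_Inj1_contract)
next
  case (s_dsum2 v x1 t1 x2 t2 e s l)
  then show ?case by (rule cfg_inv_contract) (rule rty_DSum_Inj2_contract)
next
  case (s_new1 e s n l)
  then show ?case by (rule cfg_inv_new_cons)
next
  case (s_new2 e s)
  then show ?case by (rule cfg_inv_new_nil)
next
  case (s_delete n e s l)
  then show ?case by (rule cfg_inv_delete)
qed

lemma steps_preserve_cfg_inv: "steps c c' \<Longrightarrow> cfg_inv l0 W c \<Longrightarrow> cfg_inv l0 W c'"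
  by (induction rule: rtranclp_induct) (auto intro: step_preserves_cfg_inv)

lemma ctx_vars_map_AVar [simp]: "ctx_vars (map (apfst AVar) G) = map fst G"
  by (induction G) auto

lemma rty_of_has_ty_ordered:
  assumes "has_ty False G t A"
  shows "rty (map (apfst AVar) G) t A"
  using assms by (induction False G t A rule: has_ty.induct) (auto intro: rty.intros simp: ctx_ok_def)

lemma central_polty: "central A \<Longrightarrow> polty A = Pos"
  by (cases A) auto

lemma central_value_holds_no_resources: "rty D v A \<Longrightarrow> is_val v \<Longrightarrow> central A \<Longrightarrow> ctx_res D = []"
  by (induction rule: rty.induct) (auto elim: is_val.cases simp: central_polty)

theorem proposition1:
  fixes W :: ty and t v :: tm and l l' :: freelist and e :: pol
  assumes "central W"
    and "is_exp t"
    and "has_ty False [] t W"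
    and "is_val v"
    and "has_ty True [] v W"
    and "steps (t, Star, l, Pos) (v, Star, l', e)"
  shows "l' = l"
proof -
  have "cfg_inv l W (t, Star, l, Pos)"
    using rty_of_has_ty_ordered[OF assms(3)] by (auto intro!: cfg_invI[of "[]" _ W _ "[]"] stack_ty_star)
  with assms(6) have "cfg_inv l W (v, Star, l', e)" by (rule steps_preserve_cfg_inv)
  then obtain S D A where "stack_ty S Star A W" "rty D v A" "l = ctx_res (S @ D) @ l'"
    by (auto elim: cfg_inv.cases)
  moreover from this(1) have "S = []" "A = W" by (auto elim: stack_ty_StarE)
  ultimately show ?thesis using central_value_holds_no_resources assms(1,4) by auto
qed

end
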